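(* Let $p\in[1,\infty]$, $\boldsymbol{w}\in\mathbb{R}^d\setminus\{\boldsymbol{0}\}$, $b\in\mathbb{R}$, $C(\boldsymbol{x})=\mathbf{1}\{\boldsymbol{w}\cdot\boldsymbol{x}+b>0\}$, let $\boldsymbol{\mu}_0\in\mathbb{R}^d$ be a unit vector (Euclidean norm), $\varepsilon>0$, $\delta\ge0$. Let $D_{\varepsilon,\delta|p}=\{\boldsymbol{v}\in\mathbb{R}^d:\|\boldsymbol{v}\|_p\le\varepsilon,\ |\boldsymbol{v}\cdot\boldsymbol{\mu}_0|\le\delta\}$ and let $\boldsymbol{u}_p$ be a maximizer of $|\boldsymbol{w}\cdot\boldsymbol{v}|$ over $\boldsymbol{v}\in D_{\varepsilon,\delta|p}$. Then $$\Omega_{\varepsilon,\delta|p}=\Omega(\boldsymbol{u}_p)\cup\Omega(-\boldsymbol{u}_p),$$ where $\Omega_{\varepsilon,\delta|p}$ is the set of $\boldsymbol{x}\in\mathbb{R}^d$ for which there is $\boldsymbol{x}'$ with $\|\boldsymbol{x}-\boldsymbol{x}'\|_p\le\varepsilon$, $|(\boldsymbol{x}-\boldsymbol{x}')\cdot\boldsymbol{\mu}_0|\le\delta$ and $C(\boldsymbol{x}')\ne C(\boldsymbol{x})$.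
   Context: For $\boldsymbol{v}\in\mathbb{R}^d$, $\Omega(\boldsymbol{v})=\{\boldsymbol{x}\in\mathbb{R}^d:C(\boldsymbol{x}+\boldsymbol{v})\ne C(\boldsymbol{x})\}$. *)

theory Defs
  imports "HOL-Analysis.Analysis" "HOL-Library.Extended_Real"
begin

definition pnorm :: "ereal \<Rightarrow> real ^ 'd \<Rightarrow> real" where
  "pnorm p v = (if p = \<infinity> then Max (range (\<lambda>i. \<bar>v $ i\<bar>))
     else (\<Sum>i\<in>UNIV. \<bar>v $ i\<bar> powr real_of_ereal p) powr (1 / real_of_ereal p))"

definition lin_clf :: "real ^ 'd \<Rightarrow> real \<Rightarrow> real ^ 'd \<Rightarrow> real" where
  "lin_clf w b x = (if w \<bullet> x + b > 0 then 1 else 0)"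

definition Omega :: "(real ^ 'd \<Rightarrow> real) \<Rightarrow> real ^ 'd \<Rightarrow> (real ^ 'd) set" where
  "Omega C v = {x. C (x + v) \<noteq> C x}"

definition Dset :: "ereal \<Rightarrow> real \<Rightarrow> real \<Rightarrow> real ^ 'd \<Rightarrow> (real ^ 'd) set" where
  "Dset p \<epsilon> \<delta> \<mu>0 = {v. pnorm p v \<le> \<epsilon> \<and> \<bar>v \<bullet> \<mu>0\<bar> \<le> \<delta>}"

definition Omega_adv :: "(real ^ 'd \<Rightarrow> real) \<Rightarrow> ereal \<Rightarrow> real \<Rightarrow> real \<Rightarrow> real ^ 'd \<Rightarrow> (real ^ 'd) set" where
  "Omega_adv C p \<epsilon> \<delta> \<mu>0 = {x. \<exists>x'. pnorm p (x - x') \<le> \<epsilon> \<and> \<bar>(x - x') \<bullet> \<mu>0\<bar> \<le> \<delta> \<and> C x' \<noteq> C x}"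

end

theory Submission
  imports Defs
begin

text \<open>Since \<open>D\<^sub>\<epsilon>\<^sub>,\<^sub>\<delta>\<^sub>|\<^sub>p\<close> is symmetric, \<open>\<Omega>\<^sub>\<epsilon>\<^sub>,\<^sub>\<delta>\<^sub>|\<^sub>p\<close> is the union of the sets \<open>\<Omega>(v)\<close>
  over \<open>v \<in> D\<^sub>\<epsilon>\<^sub>,\<^sub>\<delta>\<^sub>|\<^sub>p\<close>. For a linear classifier, \<open>x \<in> \<Omega>(v)\<close> means that the score
  \<open>w \<bullet> x + b\<close> crosses \<open>0\<close> when shifted by \<open>w \<bullet> v\<close>; any such crossing is also achieved by
  the shift \<open>w \<bullet> u\<close> or \<open>-(w \<bullet> u)\<close>, whose modulus is at least \<open>|w \<bullet> v|\<close>.\<close>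

lemma pnorm_uminus [simp]: "pnorm p (- v) = pnorm p v"
  unfolding pnorm_def by simp

lemma uminus_in_Dset_iff [simp]: "- v \<in> Dset p \<epsilon> \<delta> \<mu>0 \<longleftrightarrow> v \<in> Dset p \<epsilon> \<delta> \<mu>0"
  unfolding Dset_def by simp

lemma Omega_adv_eq_UN_Omega:
  "Omega_adv C p \<epsilon> \<delta> \<mu>0 = (\<Union>v\<in>Dset p \<epsilon> \<delta> \<mu>0. Omega C v)"
proof (intro equalityI subsetI)
  fix x assume "x \<in> Omega_adv C p \<epsilon> \<delta> \<mu>0"
  then obtain x' where "x - x' \<in> Dset p \<epsilon> \<delta> \<mu>0" and "C x' \<noteq> C x"
    unfolding Omega_adv_def Dset_def by blast
  then have "x' - x \<in> Dset p \<epsilon> \<delta> \<mu>0" and "x \<in> Omega C (x' - x)"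
    using uminus_in_Dset_iff[of "x' - x"] unfolding Omega_def by simp_all
  then show "x \<in> (\<Union>v\<in>Dset p \<epsilon> \<delta> \<mu>0. Omega C v)" by blast
next
  fix x assume "x \<in> (\<Union>v\<in>Dset p \<epsilon> \<delta> \<mu>0. Omega C v)"
  then obtain v where "- v \<in> Dset p \<epsilon> \<delta> \<mu>0" and "C (x + v) \<noteq> C x"
    unfolding Omega_def by auto
  then show "x \<in> Omega_adv C p \<epsilon> \<delta> \<mu>0"
    unfolding Omega_adv_def Dset_def by (intro CollectI exI[of _ "x + v"]) simp
qed

lemma Omega_lin_clf_iff:
  "x \<in> Omega (lin_clf w b) v \<longleftrightarrow> (0 < w \<bullet> x + b \<longleftrightarrow> w \<bullet> x + b \<le> - (w \<bullet> v))"
  unfolding Omega_def lin_clf_def by (auto simp: inner_add_right)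

lemma Omega_lin_clf_subset:
  assumes "\<bar>w \<bullet> v\<bar> \<le> \<bar>w \<bullet> u\<bar>"
  shows "Omega (lin_clf w b) v \<subseteq> Omega (lin_clf w b) u \<union> Omega (lin_clf w b) (- u)"
  using assms by (auto simp: Omega_lin_clf_iff abs_if split: if_splits)

theorem lemma5:
  fixes w \<mu>0 u :: "real ^ 'd" and b \<epsilon> \<delta> :: real and p :: ereal
  assumes "1 \<le> p"
    and "w \<noteq> 0"
    and "norm \<mu>0 = 1"
    and "\<epsilon> > 0" and "\<delta> \<ge> 0"
    and "u \<in> Dset p \<epsilon> \<delta> \<mu>0"
    and "\<forall>v\<in>Dset p \<epsilon> \<delta> \<mu>0. \<bar>w \<bullet> v\<bar> \<le> \<bar>w \<bullet> u\<bar>"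
  shows "Omega_adv (lin_clf w b) p \<epsilon> \<delta> \<mu>0 = Omega (lin_clf w b) u \<union> Omega (lin_clf w b) (- u)"
proof -
  have "(\<Union>v\<in>Dset p \<epsilon> \<delta> \<mu>0. Omega (lin_clf w b) v)
      \<subseteq> Omega (lin_clf w b) u \<union> Omega (lin_clf w b) (- u)"
    using assms(7) Omega_lin_clf_subset by blast
  moreover have "u \<in> Dset p \<epsilon> \<delta> \<mu>0" and "- u \<in> Dset p \<epsilon> \<delta> \<mu>0"
    using assms(6) by simp_all
  ultimately show ?thesis
    unfolding Omega_adv_eq_UN_Omega by blast
qed

end
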